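(* Let $\mathbb{R}^d=V\oplus W$ with $\dim V=\ell$ and $\dim W=d-\ell$. Let $K\subseteq V$ and $L\subseteq W$ be convex bodies (in $V$ and $W$ respectively) that contain the origin, and let $\Lambda\subseteq V$ and $\Gamma\subseteq W$ be lattices. Then for every $i\in\{1,\dots,d\}$, $$\mu_i(K\oplus L,\Lambda\oplus\Gamma)=\max_{\substack{0\le j\le \ell\\ 0\le i-j\le d-\ell}}\Big(\mu_j(K,\Lambda)+\mu_{i-j}(L,\Gamma)\Big).$$
   Context: A convex body in a real vector space is a full-dimensional compact convex subset; a lattice is a full-rank discrete subgroup. The direct sum of $K\subseteq V$ and $L\subseteq W$ (both containing the origin) is $K\oplus L=\{\lambda x+(1-\lambda)y: x\in K,\ y\in L,\ \lambda\in[0,1]\}\subseteq\mathbb{R}^d$, and $\Lambda\oplus\Gamma=\{a+b: a\in\Lambda,\ b\in\Gamma\}$. For a $k$-dimensional real vector space $E$, a lattice $\Gamma'\subseteq E$, a convex body $C\subseteq E$ and $i\in\{1,\dots,k\}$, the $i$-th covering minimum is $\mu_i(C,\Gamma')=\min\{\mu\ge 0: (\mu C+\Gamma')\cap U\neq\emptyset$ for every affine subspace $U\subseteq E$ of dimension $k-i\}$; by convention $\mu_0(C,\Gamma')=0$. Covering minima of $K,\Lambda$ are taken in $V$, those of $L,\Gamma$ in $W$. *)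

theory Defs
  imports "HOL-Analysis.Analysis"
begin

definition convex_body_in :: "'a::euclidean_space set \<Rightarrow> 'a set \<Rightarrow> bool" where
  "convex_body_in E C \<longleftrightarrow> C \<subseteq> E \<and> compact C \<and> convex C \<and> aff_dim C = int (dim E)"

definition lattice_in :: "'a::euclidean_space set \<Rightarrow> 'a set \<Rightarrow> bool" where
  "lattice_in E G \<longleftrightarrow> G \<subseteq> E \<and> 0 \<in> G \<and> (\<forall>x\<in>G. \<forall>y\<in>G. x + y \<in> G) \<and> (\<forall>x\<in>G. - x \<in> G)
     \<and> (\<exists>e>0. \<forall>x\<in>G. x \<noteq> 0 \<longrightarrow> e \<le> norm x) \<and> span G = E"

definition dil_plus :: "real \<Rightarrow> 'a::euclidean_space set \<Rightarrow> 'a set \<Rightarrow> 'a set" where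
  "dil_plus \<mu> C G = {\<mu> *\<^sub>R c + g | c g. c \<in> C \<and> g \<in> G}"

definition covering_minimum :: "'a::euclidean_space set \<Rightarrow> 'a set \<Rightarrow> 'a set \<Rightarrow> nat \<Rightarrow> real" where
  "covering_minimum E C G i = (if i = 0 then 0 else
     Inf {\<mu>. \<mu> \<ge> 0 \<and> (\<forall>U. U \<subseteq> E \<and> affine U \<and> U \<noteq> {} \<and> aff_dim U = int (dim E) - int i
            \<longrightarrow> dil_plus \<mu> C G \<inter> U \<noteq> {})})"

definition direct_sum_set :: "'a::euclidean_space set \<Rightarrow> 'a set \<Rightarrow> 'a set" where
  "direct_sum_set K L = {t *\<^sub>R x + (1 - t) *\<^sub>R y | t x y. x \<in> K \<and> y \<in> L \<and> 0 \<le> t \<and> t \<le> 1}"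

definition lattice_sum :: "'a::euclidean_space set \<Rightarrow> 'a set \<Rightarrow> 'a set" where
  "lattice_sum A B = {a + b | a b. a \<in> A \<and> b \<in> B}"

end

theory Submission
  imports Defs
begin

text \<open>
  An affine subspace U of codimension i splits along V \<oplus> W: its projection to W along V is a flat
  of codimension k in W, and over each point of that projection U contains a translate of a flat
  of codimension j = i - k in V. Hitting the projection with \<mu>2 L + \<Gamma> and then the fibre with
  \<mu>1 K + \<Lambda> gives a point of U in (\<mu>1 + \<mu>2) (K \<oplus> L) + \<Lambda> \<oplus> \<Gamma>; this is the upper bound.

  Conversely, take flats U1 \<subseteq> V and U2 \<subseteq> W of codimensions j and i - j that miss \<nu> K + \<Lambda> for
  all \<nu> \<le> \<mu>_j(K, \<Lambda>) - \<delta>, resp. \<nu> L + \<Gamma> for all \<nu> \<le> \<mu>_(i-j)(L, \<Gamma>) - \<delta>. Then U1 + U2 has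
  codimension i, and a point \<mu> (t x + (1 - t) y) + a + b of it decomposes uniquely as
  (t \<mu> x + a) + ((1 - t) \<mu> y + b) with summands in U1 and U2, so one of t \<mu> and (1 - t) \<mu> exceeds
  its threshold and \<mu> > \<mu>_j(K, \<Lambda>) + \<mu>_(i-j)(L, \<Gamma>) - 2 \<delta>.
\<close>

definition flat_in :: "'a::euclidean_space set \<Rightarrow> int \<Rightarrow> 'a set \<Rightarrow> bool" where
  "flat_in E n U \<longleftrightarrow> U \<subseteq> E \<and> affine U \<and> U \<noteq> {} \<and> aff_dim U = n"

definition meets_all_flats ::
    "'a::euclidean_space set \<Rightarrow> 'a set \<Rightarrow> 'a set \<Rightarrow> nat \<Rightarrow> real \<Rightarrow> bool" where
  "meets_all_flats E C G k \<mu> \<longleftrightarrow>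
     (\<forall>U. flat_in E (int (dim E) - int k) U \<longrightarrow> dil_plus \<mu> C G \<inter> U \<noteq> {})"

lemma covering_minimum_eq_Inf:
  "k \<noteq> 0 \<Longrightarrow> covering_minimum E C G k = Inf {\<mu>. 0 \<le> \<mu> \<and> meets_all_flats E C G k \<mu>}"
  unfolding covering_minimum_def meets_all_flats_def flat_in_def by simp

lemma flat_in_aff_dim_bounds:
  assumes "subspace E" "flat_in E n U"
  shows "0 \<le> n" "n \<le> int (dim E)"
  using assms aff_dim_subset[of U E] aff_dim_negative_iff[of U]
  by (auto simp: flat_in_def aff_dim_subspace)

lemma flat_in_dim_eq:
  assumes "subspace E" "flat_in E (int (dim E)) U"
  shows "U = E"
  using assms affine_dim_equal[of U E]
  by (simp add: flat_in_def subspace_imp_affine aff_dim_subspace)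

lemma flat_in_translation_subspace:
  assumes "subspace E" "subspace S" "S \<subseteq> E" "a \<in> E"
  shows "flat_in E (int (dim S)) ((+) a ` S)"
  unfolding flat_in_def
  using assms subspace_0[OF assms(2)] affine_translation[THEN iffD1, OF subspace_imp_affine]
  by (auto simp: aff_dim_translation_eq aff_dim_subspace subspace_add)

lemma flat_in_translation_subspaceE:
  assumes "subspace E" "flat_in E n U"
  obtains a S where "a \<in> E" "subspace S" "S \<subseteq> E" "U = (+) a ` S" "n = int (dim S)"
proof -
  obtain a where "a \<in> U" using assms(2) by (auto simp: flat_in_def)
  define S where "S = (\<lambda>x. x - a) ` U"
  have "subspace S"
    unfolding S_def using \<open>a \<in> U\<close> assms(2) by (simp add: flat_in_def affine_diffs_subspace_subtract)
  have "a \<in> E" "U \<subseteq> E" using \<open>a \<in> U\<close> assms(2) by (auto simp: flat_in_def)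
  then have "S \<subseteq> E"
    unfolding S_def using assms(1) by (auto intro: subspace_diff)
  have "U = (+) a ` S" by (simp add: S_def image_image)
  moreover have "n = int (dim S)"
    using assms(2) \<open>subspace S\<close>
    by (simp add: flat_in_def calculation aff_dim_translation_eq aff_dim_subspace)
  ultimately show thesis using that \<open>a \<in> E\<close> \<open>subspace S\<close> \<open>S \<subseteq> E\<close> by blast
qed

lemma convex_scaleR_mem:
  assumes "convex C" "0 \<in> C" "x \<in> C" "0 \<le> t" "t \<le> 1"
  shows "t *\<^sub>R x \<in> C"
  using convexD[OF assms(1,3,2), of t "1 - t"] assms(4,5) by simp

lemma dil_plus_mono:
  assumes "convex C" "0 \<in> C" "0 \<le> \<nu>" "\<nu> \<le> \<mu>"
  shows "dil_plus \<nu> C G \<subseteq> dil_plus \<mu> C G"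
proof
  fix z assume "z \<in> dil_plus \<nu> C G"
  then obtain c g where z: "z = \<nu> *\<^sub>R c + g" "c \<in> C" "g \<in> G" unfolding dil_plus_def by auto
  show "z \<in> dil_plus \<mu> C G"
  proof (cases "\<mu> = 0")
    case True
    then show ?thesis using z assms(3,4) unfolding dil_plus_def by auto
  next
    case False
    then have "(\<nu> / \<mu>) *\<^sub>R c \<in> C" "z = \<mu> *\<^sub>R ((\<nu> / \<mu>) *\<^sub>R c) + g"
      using convex_scaleR_mem[OF assms(1,2) z(2)] assms(3,4) z(1) by auto
    then show ?thesis using z(3) unfolding dil_plus_def by blast
  qed
qed

lemma dil_plus_subset:
  assumes "subspace E" "C \<subseteq> E" "G \<subseteq> E"
  shows "dil_plus \<mu> C G \<subseteq> E"
  using assms unfolding dil_plus_def by (auto intro: subspace_add subspace_scale)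

lemma lattice_in_scaleR_of_int:
  assumes "lattice_in E G" "g \<in> G"
  shows "of_int k *\<^sub>R g \<in> G"
proof (induction k rule: int_induct[of _ 0])
  case base
  then show ?case using assms(1) by (simp add: lattice_in_def)
next
  case (step1 k)
  have "of_int (k + 1) *\<^sub>R g = of_int k *\<^sub>R g + g" by (simp add: algebra_simps)
  then show ?case using step1 assms unfolding lattice_in_def by metis
next
  case (step2 k)
  have "of_int (k - 1) *\<^sub>R g = of_int k *\<^sub>R g + - g" by (simp add: algebra_simps)
  then show ?case using step2 assms unfolding lattice_in_def by metis
qed

lemma lattice_in_sum:
  assumes "lattice_in E G" "finite B" "\<And>b. b \<in> B \<Longrightarrow> h b \<in> G"
  shows "sum h B \<in> G"
  using assms(2,3) by induction (use assms(1) in \<open>auto simp: lattice_in_def\<close>)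

lemma lattice_in_bounded_distance:
  assumes "lattice_in E G"
  obtains R where "0 \<le> R" "\<And>z. z \<in> E \<Longrightarrow> \<exists>g\<in>G. norm (z - g) \<le> R"
proof -
  obtain B where "B \<subseteq> G" "independent B" "G \<subseteq> span B"
    by (rule maximal_independent_subset)
  then have "finite B" by (simp add: finiteI_independent)
  have "E \<subseteq> span B"
    using assms \<open>G \<subseteq> span B\<close> unfolding lattice_in_def by (metis span_minimal subspace_span)
  define R where "R = (\<Sum>b\<in>B. norm b)"
  have "\<exists>g\<in>G. norm (z - g) \<le> R" if "z \<in> E" for z
  proof -
    obtain u where u: "z = (\<Sum>b\<in>B. u b *\<^sub>R b)"
      using \<open>z \<in> E\<close> \<open>E \<subseteq> span B\<close> span_finite[OF \<open>finite B\<close>] by auto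
    define g where "g = (\<Sum>b\<in>B. of_int \<lfloor>u b\<rfloor> *\<^sub>R b)"
    have "g \<in> G"
      unfolding g_def using \<open>B \<subseteq> G\<close>
      by (intro lattice_in_sum[OF assms \<open>finite B\<close>] lattice_in_scaleR_of_int[OF assms]) auto
    have "norm (z - g) = norm (\<Sum>b\<in>B. (u b - of_int \<lfloor>u b\<rfloor>) *\<^sub>R b)"
      unfolding u g_def by (simp add: sum_subtractf scaleR_diff_left)
    also have "\<dots> \<le> (\<Sum>b\<in>B. norm ((u b - of_int \<lfloor>u b\<rfloor>) *\<^sub>R b))"
      by (rule norm_sum)
    also have "\<dots> \<le> R"
      unfolding R_def by (intro sum_mono) (auto intro!: mult_left_le_one_le, linarith+)
    finally show ?thesis using \<open>g \<in> G\<close> by blast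
  qed
  moreover have "0 \<le> R" unfolding R_def by (simp add: sum_nonneg)
  ultimately show thesis using that by blast
qed

lemma subspace_subset_dil_plus:
  assumes "subspace E" "convex_body_in E C" "lattice_in E G"
  obtains \<mu> where "0 < \<mu>" "E \<subseteq> dil_plus \<mu> C G"
proof -
  have "C \<subseteq> E" "convex C" "aff_dim C = int (dim E)"
    using assms(2) by (auto simp: convex_body_in_def)
  then have "C \<noteq> {}" by auto
  have "affine hull C = E"
    using assms(1) \<open>C \<subseteq> E\<close> \<open>C \<noteq> {}\<close> \<open>aff_dim C = int (dim E)\<close>
    by (intro flat_in_dim_eq) (auto simp: flat_in_def hull_minimal subspace_imp_affine)
  obtain p where "p \<in> rel_interior C"
    using rel_interior_eq_empty[OF \<open>convex C\<close>] \<open>C \<noteq> {}\<close> by blast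
  then obtain e where "p \<in> C" "0 < e" and ball: "ball p e \<inter> E \<subseteq> C"
    unfolding mem_rel_interior_ball \<open>affine hull C = E\<close> by blast
  obtain R where "0 \<le> R" and near: "\<And>z. z \<in> E \<Longrightarrow> \<exists>g\<in>G. norm (z - g) \<le> R"
    using lattice_in_bounded_distance[OF assms(3)] by blast
  define \<mu> where "\<mu> = R / e + 1"
  have "0 < \<mu>" "R / \<mu> < e"
    using \<open>0 < e\<close> \<open>0 \<le> R\<close> by (auto simp: \<mu>_def field_simps)
  have "z \<in> dil_plus \<mu> C G" if "z \<in> E" for z
  proof -
    have "p \<in> E" using \<open>p \<in> C\<close> \<open>C \<subseteq> E\<close> by auto
    then obtain g where "g \<in> G" and g: "norm (z - \<mu> *\<^sub>R p - g) \<le> R"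
      using near[of "z - \<mu> *\<^sub>R p"] \<open>z \<in> E\<close> assms(1) by (auto intro: subspace_diff subspace_scale)
    define c where "c = p + (1 / \<mu>) *\<^sub>R (z - \<mu> *\<^sub>R p - g)"
    have "g \<in> E" using \<open>g \<in> G\<close> assms(3) by (auto simp: lattice_in_def)
    then have "c \<in> E"
      unfolding c_def using \<open>p \<in> E\<close> \<open>z \<in> E\<close> assms(1)
      by (intro subspace_add subspace_scale subspace_diff)
    moreover have "dist p c < e"
      using g \<open>0 < \<mu>\<close> \<open>R / \<mu> < e\<close> divide_right_mono[OF g, of \<mu>]
      by (simp add: c_def dist_norm)
    ultimately have "c \<in> C" using ball by auto
    moreover have "z = \<mu> *\<^sub>R c + g" using \<open>0 < \<mu>\<close> by (simp add: c_def algebra_simps)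
    ultimately show ?thesis using \<open>g \<in> G\<close> unfolding dil_plus_def by blast
  qed
  then show thesis using that \<open>0 < \<mu>\<close> by blast
qed

lemma meets_all_flats_exists:
  assumes "subspace E" "convex_body_in E C" "lattice_in E G"
  shows "\<exists>\<mu>\<ge>0. meets_all_flats E C G k \<mu>"
proof -
  obtain \<mu> where "0 < \<mu>" "E \<subseteq> dil_plus \<mu> C G"
    using subspace_subset_dil_plus[OF assms] .
  then show ?thesis unfolding meets_all_flats_def flat_in_def by (intro exI[of _ \<mu>]) auto
qed

lemma covering_minimum_nonneg:
  assumes "subspace E" "convex_body_in E C" "lattice_in E G"
  shows "0 \<le> covering_minimum E C G k"
proof (cases "k = 0")
  case False
  then show ?thesis
    using meets_all_flats_exists[OF assms, of k]
    by (auto simp: covering_minimum_eq_Inf intro: cInf_greatest)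
qed (simp add: covering_minimum_def)

lemma meets_all_flats_near_covering_minimum:
  assumes "subspace E" "convex_body_in E C" "lattice_in E G" "0 \<in> C" "0 < \<epsilon>"
  obtains \<mu> where "0 \<le> \<mu>" "\<mu> < covering_minimum E C G k + \<epsilon>" "meets_all_flats E C G k \<mu>"
proof (cases "k = 0")
  case True
  have "0 \<in> G" using assms(3) by (simp add: lattice_in_def)
  then have "0 \<in> dil_plus 0 C G"
    using assms(4) unfolding dil_plus_def by force
  moreover have "0 \<in> E" using assms(1) by (rule subspace_0)
  ultimately have "meets_all_flats E C G k 0"
    using True flat_in_dim_eq[OF assms(1)] unfolding meets_all_flats_def by fastforce
  moreover have "0 < covering_minimum E C G k + \<epsilon>"
    using True assms(5) by (simp add: covering_minimum_def)
  ultimately show thesis using that[of 0] by simp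
next
  case False
  let ?S = "{\<mu>. 0 \<le> \<mu> \<and> meets_all_flats E C G k \<mu>}"
  have "?S \<noteq> {}" using meets_all_flats_exists[OF assms(1-3)] by auto
  moreover have "bdd_below ?S" by (rule bdd_belowI[of _ 0]) auto
  moreover have "Inf ?S < Inf ?S + \<epsilon>" using assms(5) by simp
  ultimately obtain \<mu> where "\<mu> \<in> ?S" "\<mu> < Inf ?S + \<epsilon>"
    by (meson cInf_less_iff)
  then show thesis using that False by (auto simp: covering_minimum_eq_Inf)
qed

lemma flat_avoiding_dil_plus:
  assumes "subspace E" "convex C" "0 \<in> C" "k \<le> dim E" "\<mu> < covering_minimum E C G k"
  obtains U where "flat_in E (int (dim E) - int k) U"
    "\<And>\<nu>. 0 \<le> \<nu> \<Longrightarrow> \<nu> \<le> \<mu> \<Longrightarrow> dil_plus \<nu> C G \<inter> U = {}"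
proof (cases "\<mu> < 0")
  case True
  obtain S where "subspace S" "S \<subseteq> span E" "dim S = dim E - k"
    using choose_subspace_of_subspace[of "dim E - k" E] by auto
  moreover have "S \<subseteq> E" using \<open>S \<subseteq> span E\<close> assms(1) by (metis span_eq_iff)
  ultimately have "flat_in E (int (dim S)) ((+) 0 ` S)"
    using assms(1) by (intro flat_in_translation_subspace) (auto simp: subspace_0)
  moreover have "int (dim S) = int (dim E) - int k" using \<open>dim S = dim E - k\<close> assms(4) by simp
  ultimately show thesis using that True by auto
next
  case False
  then have "k \<noteq> 0" using assms(5) by (auto simp: covering_minimum_def split: if_splits)
  have "\<not> meets_all_flats E C G k \<mu>"
  proof
    assume "meets_all_flats E C G k \<mu>"
    then have "covering_minimum E C G k \<le> \<mu>"
      using False \<open>k \<noteq> 0\<close> by (auto simp: covering_minimum_eq_Inf intro!: cInf_lower bdd_belowI[of _ 0])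
    then show False using assms(5) by simp
  qed
  then obtain U where "flat_in E (int (dim E) - int k) U" "dil_plus \<mu> C G \<inter> U = {}"
    unfolding meets_all_flats_def by blast
  then show thesis using that dil_plus_mono[OF assms(2,3)] by blast
qed

lemma covering_minimum_eqI:
  assumes "k \<noteq> 0" "0 \<le> M"
    and above: "\<And>\<mu>. M < \<mu> \<Longrightarrow> meets_all_flats E C G k \<mu>"
    and below: "\<And>\<mu>. 0 \<le> \<mu> \<Longrightarrow> meets_all_flats E C G k \<mu> \<Longrightarrow> M \<le> \<mu>"
  shows "covering_minimum E C G k = M"
proof -
  let ?S = "{\<mu>. 0 \<le> \<mu> \<and> meets_all_flats E C G k \<mu>}"
  have in_S: "M + e \<in> ?S" if "0 < e" for e using above assms(2) that by simp
  have bdd: "bdd_below ?S" by (rule bdd_belowI[of _ 0]) auto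
  have "Inf ?S \<le> M"
    by (rule field_le_epsilon) (use in_S cInf_lower[OF _ bdd] in blast)
  moreover have "M \<le> Inf ?S"
    using in_S[of 1] below by (intro cInf_greatest) auto
  ultimately show ?thesis using assms(1) by (simp add: covering_minimum_eq_Inf)
qed

lemma direct_sum_decomposition_unique:
  assumes "subspace V" "subspace W" "V \<inter> W = {0}"
    and "v \<in> V" "v' \<in> V" "w \<in> W" "w' \<in> W" "v + w = v' + w'"
  shows "v = v'" "w = w'"
proof -
  have "v - v' = w' - w" using assms(8) by (simp add: algebra_simps)
  moreover have "v - v' \<in> V" using assms(1,4,5) by (rule subspace_diff)
  moreover have "w' - w \<in> W" using assms(2,7,6) by (rule subspace_diff)
  ultimately have "v - v' \<in> V \<inter> W" by simp
  then have "v = v'" using assms(3) by simp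
  then show "v = v'" "w = w'" using assms(8) by simp_all
qed

lemma dim_inter_plus_dim_projection:
  fixes V W S :: "'a::euclidean_space set"
  assumes "subspace V" "subspace W" "V \<inter> W = {0}" "{v + w | v w. v \<in> V \<and> w \<in> W} = UNIV"
    and "subspace S"
  shows "dim (S \<inter> V) + dim (W \<inter> {x + y | x y. x \<in> S \<and> y \<in> V}) = dim S"
proof -
  define Q where "Q = {x + y | x y. x \<in> S \<and> y \<in> V}"
  have "subspace Q" unfolding Q_def using assms(5,1) by (rule subspace_sums)
  have "V \<subseteq> Q" unfolding Q_def using subspace_0[OF assms(5)] by force
  have "Q = {x + y | x y. x \<in> V \<and> y \<in> W \<inter> Q}"
  proof (intro set_eqI iffI)
    fix z assume "z \<in> Q"
    obtain v w where "v \<in> V" "w \<in> W" "z = v + w" using assms(4) by blast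
    moreover have "w \<in> Q"
      using \<open>z \<in> Q\<close> \<open>v \<in> V\<close> \<open>V \<subseteq> Q\<close> \<open>subspace Q\<close> \<open>z = v + w\<close> subspace_diff[of Q z v] by auto
    ultimately show "z \<in> {x + y | x y. x \<in> V \<and> y \<in> W \<inter> Q}" by blast
  next
    fix z assume "z \<in> {x + y | x y. x \<in> V \<and> y \<in> W \<inter> Q}"
    then show "z \<in> Q" using \<open>V \<subseteq> Q\<close> \<open>subspace Q\<close> by (auto intro: subspace_add)
  qed
  moreover have "V \<inter> (W \<inter> Q) = {0}" using assms(3) \<open>V \<subseteq> Q\<close> by auto
  ultimately have "dim Q = dim V + dim (W \<inter> Q)"
    using dim_sums_Int[OF assms(1) subspace_inter[OF assms(2) \<open>subspace Q\<close>]] by simp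
  moreover have "dim Q + dim (S \<inter> V) = dim S + dim V"
    unfolding Q_def by (rule dim_sums_Int[OF assms(5,1)])
  ultimately show ?thesis unfolding Q_def by simp
qed

lemma flat_splits_along_direct_sum:
  assumes "subspace V" "subspace W" "V \<inter> W = {0}" "{v + w | v w. v \<in> V \<and> w \<in> W} = UNIV"
    and "flat_in UNIV n U"
  obtains m P where "flat_in W (n - int m) P"
    "\<And>w. w \<in> P \<Longrightarrow> \<exists>F. flat_in V (int m) F \<and> (\<lambda>v. v + w) ` F \<subseteq> U"
proof -
  obtain a S where "subspace S" "U = (+) a ` S" "n = int (dim S)"
    using flat_in_translation_subspaceE[OF subspace_UNIV assms(5)] by blast
  define T where "T = S \<inter> V"
  define Q where "Q = {x + y | x y. x \<in> S \<and> y \<in> V}"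
  \<comment> \<open>W \<inter> Q is the direction of the projection of U to W along V, T that of each fibre.\<close>
  have "subspace T" unfolding T_def using \<open>subspace S\<close> assms(1) by (rule subspace_inter)
  have "subspace (W \<inter> Q)"
    unfolding Q_def using assms(1,2) \<open>subspace S\<close> by (intro subspace_inter subspace_sums)
  have dims: "dim T + dim (W \<inter> Q) = dim S"
    unfolding T_def Q_def by (rule dim_inter_plus_dim_projection[OF assms(1-4) \<open>subspace S\<close>])
  obtain v0 w0 where "v0 \<in> V" "w0 \<in> W" "a = v0 + w0" using assms(4) by blast
  have "flat_in W (int (dim (W \<inter> Q))) ((+) w0 ` (W \<inter> Q))"
    using assms(2) \<open>subspace (W \<inter> Q)\<close> \<open>w0 \<in> W\<close> by (intro flat_in_translation_subspace) auto
  moreover have "\<exists>F. flat_in V (int (dim T)) F \<and> (\<lambda>v. v + w) ` F \<subseteq> U"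
    if w: "w \<in> (+) w0 ` (W \<inter> Q)" for w
  proof -
    obtain x y where "x \<in> S" "y \<in> V" "w = w0 + (x + y)"
      using w unfolding Q_def by blast
    have "v0 - y \<in> V" using assms(1) \<open>v0 \<in> V\<close> \<open>y \<in> V\<close> by (rule subspace_diff)
    then have "flat_in V (int (dim T)) ((+) (v0 - y) ` T)"
      using assms(1) \<open>subspace T\<close> by (intro flat_in_translation_subspace) (auto simp: T_def)
    moreover have "(\<lambda>v. v + w) ` (+) (v0 - y) ` T \<subseteq> U"
    proof
      fix z assume "z \<in> (\<lambda>v. v + w) ` (+) (v0 - y) ` T"
      then obtain t where "t \<in> T" "z = a + (x + t)"
        using \<open>w = w0 + (x + y)\<close> \<open>a = v0 + w0\<close> by (auto simp: algebra_simps)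
      then show "z \<in> U"
        using \<open>x \<in> S\<close> \<open>subspace S\<close> \<open>U = (+) a ` S\<close> by (auto simp: T_def intro: subspace_add)
    qed
    ultimately show ?thesis by blast
  qed
  moreover have "n - int (dim T) = int (dim (W \<inter> Q))" using dims \<open>n = int (dim S)\<close> by simp
  ultimately show thesis using that[of "dim T" "(+) w0 ` (W \<inter> Q)"] by simp
qed

lemma flat_in_sums:
  assumes "subspace V" "subspace W" "V \<inter> W = {0}" "flat_in V m U1" "flat_in W n U2"
  shows "flat_in UNIV (m + n) {x + y | x y. x \<in> U1 \<and> y \<in> U2}"
proof -
  obtain a1 S1 where "a1 \<in> V" and S1: "subspace S1" "S1 \<subseteq> V" and U1: "U1 = (+) a1 ` S1"
    and m: "m = int (dim S1)"
    by (rule flat_in_translation_subspaceE[OF assms(1,4)])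
  obtain a2 S2 where "a2 \<in> W" and S2: "subspace S2" "S2 \<subseteq> W" and U2: "U2 = (+) a2 ` S2"
    and n: "n = int (dim S2)"
    by (rule flat_in_translation_subspaceE[OF assms(2,5)])
  define S where "S = {x + y | x y. x \<in> S1 \<and> y \<in> S2}"
  have "subspace S" unfolding S_def using S1(1) S2(1) by (rule subspace_sums)
  have "S1 \<inter> S2 = {0}"
    using S1(2) S2(2) assms(3) subspace_0[OF S1(1)] subspace_0[OF S2(1)] by auto
  then have "dim S = dim S1 + dim S2"
    using dim_sums_Int[OF S1(1) S2(1)] unfolding S_def by simp
  moreover have "{x + y | x y. x \<in> U1 \<and> y \<in> U2} = (+) (a1 + a2) ` S"
  proof (intro set_eqI iffI)
    fix z assume "z \<in> {x + y | x y. x \<in> U1 \<and> y \<in> U2}"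
    then obtain s1 s2 where "s1 \<in> S1" "s2 \<in> S2" "z = (a1 + s1) + (a2 + s2)"
      unfolding U1 U2 by blast
    moreover have "(a1 + s1) + (a2 + s2) = (a1 + a2) + (s1 + s2)" by (simp add: algebra_simps)
    ultimately show "z \<in> (+) (a1 + a2) ` S" unfolding S_def by blast
  next
    fix z assume "z \<in> (+) (a1 + a2) ` S"
    then obtain s1 s2 where "s1 \<in> S1" "s2 \<in> S2" "z = (a1 + a2) + (s1 + s2)"
      unfolding S_def by blast
    moreover have "(a1 + a2) + (s1 + s2) = (a1 + s1) + (a2 + s2)" by (simp add: algebra_simps)
    ultimately show "z \<in> {x + y | x y. x \<in> U1 \<and> y \<in> U2}" unfolding U1 U2 by blast
  qed
  ultimately show ?thesis
    using flat_in_translation_subspace[OF subspace_UNIV \<open>subspace S\<close>, of "a1 + a2"] m n by simp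
qed

lemma dil_plus_direct_sum:
  "dil_plus \<mu> (direct_sum_set K L) (lattice_sum \<Lambda> \<Gamma>) =
     {p + q | p q t. 0 \<le> t \<and> t \<le> 1 \<and> p \<in> dil_plus (\<mu> * t) K \<Lambda> \<and> q \<in> dil_plus (\<mu> * (1 - t)) L \<Gamma>}"
proof (intro set_eqI iffI)
  fix z assume "z \<in> dil_plus \<mu> (direct_sum_set K L) (lattice_sum \<Lambda> \<Gamma>)"
  then obtain t x y a b where "0 \<le> t" "t \<le> 1" "x \<in> K" "y \<in> L" "a \<in> \<Lambda>" "b \<in> \<Gamma>"
    and "z = \<mu> *\<^sub>R (t *\<^sub>R x + (1 - t) *\<^sub>R y) + (a + b)"
    unfolding dil_plus_def direct_sum_set_def lattice_sum_def by blast
  moreover have "\<mu> *\<^sub>R (t *\<^sub>R x + (1 - t) *\<^sub>R y) + (a + b) =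
      ((\<mu> * t) *\<^sub>R x + a) + ((\<mu> * (1 - t)) *\<^sub>R y + b)"
    by (simp add: algebra_simps)
  ultimately show "z \<in> {p + q | p q t. 0 \<le> t \<and> t \<le> 1 \<and>
      p \<in> dil_plus (\<mu> * t) K \<Lambda> \<and> q \<in> dil_plus (\<mu> * (1 - t)) L \<Gamma>}"
    unfolding dil_plus_def by blast
next
  fix z assume "z \<in> {p + q | p q t. 0 \<le> t \<and> t \<le> 1 \<and>
      p \<in> dil_plus (\<mu> * t) K \<Lambda> \<and> q \<in> dil_plus (\<mu> * (1 - t)) L \<Gamma>}"
  then obtain t x y a b where "0 \<le> t" "t \<le> 1" "x \<in> K" "y \<in> L" "a \<in> \<Lambda>" "b \<in> \<Gamma>"
    and "z = ((\<mu> * t) *\<^sub>R x + a) + ((\<mu> * (1 - t)) *\<^sub>R y + b)"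
    unfolding dil_plus_def by blast
  moreover have "((\<mu> * t) *\<^sub>R x + a) + ((\<mu> * (1 - t)) *\<^sub>R y + b) =
      \<mu> *\<^sub>R (t *\<^sub>R x + (1 - t) *\<^sub>R y) + (a + b)"
    by (simp add: algebra_simps)
  ultimately show "z \<in> dil_plus \<mu> (direct_sum_set K L) (lattice_sum \<Lambda> \<Gamma>)"
    unfolding dil_plus_def direct_sum_set_def lattice_sum_def by blast
qed

lemma dil_plus_add_mem_direct_sum:
  assumes "convex K" "0 \<in> K" "convex L" "0 \<in> L"
    and "0 \<le> \<mu>1" "0 \<le> \<mu>2" "\<mu>1 + \<mu>2 \<le> \<mu>"
    and "p \<in> dil_plus \<mu>1 K \<Lambda>" "q \<in> dil_plus \<mu>2 L \<Gamma>"
  shows "p + q \<in> dil_plus \<mu> (direct_sum_set K L) (lattice_sum \<Lambda> \<Gamma>)"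
proof -
  define t where "t = \<mu>1 / \<mu>"
  have "0 \<le> t" "t \<le> 1" "\<mu> * t = \<mu>1" "\<mu>2 \<le> \<mu> * (1 - t)"
    by (cases "\<mu> = 0") (use assms(5-7) in \<open>auto simp: t_def field_simps divide_le_eq_1\<close>)
  then have "q \<in> dil_plus (\<mu> * (1 - t)) L \<Gamma>"
    using dil_plus_mono[OF assms(3,4,6)] assms(9) by blast
  then show ?thesis
    unfolding dil_plus_direct_sum using \<open>0 \<le> t\<close> \<open>t \<le> 1\<close> \<open>\<mu> * t = \<mu>1\<close> assms(8) by blast
qed

locale direct_sum_covering =
  fixes V W K L \<Lambda> \<Gamma> :: "'a::euclidean_space set"
  assumes subspace_V: "subspace V" and subspace_W: "subspace W"
    and V_Int_W: "V \<inter> W = {0}" and V_plus_W: "{v + w | v w. v \<in> V \<and> w \<in> W} = UNIV"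
    and body_K: "convex_body_in V K" and zero_in_K: "0 \<in> K"
    and body_L: "convex_body_in W L" and zero_in_L: "0 \<in> L"
    and lattice_\<Lambda>: "lattice_in V \<Lambda>" and lattice_\<Gamma>: "lattice_in W \<Gamma>"
begin

lemma convex_K: "convex K" and convex_L: "convex L"
  and K_subset_V: "K \<subseteq> V" and L_subset_W: "L \<subseteq> W"
  using body_K body_L by (simp_all add: convex_body_in_def)

lemma \<Lambda>_subset_V: "\<Lambda> \<subseteq> V" and \<Gamma>_subset_W: "\<Gamma> \<subseteq> W"
  using lattice_\<Lambda> lattice_\<Gamma> unfolding lattice_in_def by blast+

lemma dim_V_plus_dim_W: "dim V + dim W = DIM('a)"
  using dim_sums_Int[OF subspace_V subspace_W] V_Int_W V_plus_W by simp

lemma flat_splits_with_codimensions: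
  assumes "flat_in UNIV (int DIM('a) - int i) U"
  obtains j P where "j \<le> dim V" "j \<le> i" "i - j \<le> dim W"
    "flat_in W (int (dim W) - int (i - j)) P"
    "\<And>w. w \<in> P \<Longrightarrow> \<exists>F. flat_in V (int (dim V) - int j) F \<and> (\<lambda>v. v + w) ` F \<subseteq> U"
proof -
  obtain m P where P: "flat_in W (int DIM('a) - int i - int m) P"
    and fibres: "\<And>w. w \<in> P \<Longrightarrow> \<exists>F. flat_in V (int m) F \<and> (\<lambda>v. v + w) ` F \<subseteq> U"
    using flat_splits_along_direct_sum[OF subspace_V subspace_W V_Int_W V_plus_W assms] by blast
  obtain w0 where "w0 \<in> P" using P by (auto simp: flat_in_def)
  then have "m \<le> dim V"
    using fibres flat_in_aff_dim_bounds(2)[OF subspace_V] by fastforce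
  define j where "j = dim V - m"
  have "j \<le> dim V" "j \<le> i" "i - j \<le> dim W"
    and codim_P: "int DIM('a) - int i - int m = int (dim W) - int (i - j)"
    using flat_in_aff_dim_bounds[OF subspace_W P] \<open>m \<le> dim V\<close> dim_V_plus_dim_W
    by (auto simp: j_def)
  moreover have "int m = int (dim V) - int j" using \<open>m \<le> dim V\<close> by (simp add: j_def)
  ultimately show thesis
    using that[of j P] P fibres unfolding codim_P by presburger
qed

lemma meets_all_flats_direct_sum:
  assumes "\<And>j. j \<le> dim V \<Longrightarrow> j \<le> i \<Longrightarrow> i - j \<le> dim W \<Longrightarrow>
      covering_minimum V K \<Lambda> j + covering_minimum W L \<Gamma> (i - j) < \<mu>"
  shows "meets_all_flats UNIV (direct_sum_set K L) (lattice_sum \<Lambda> \<Gamma>) i \<mu>"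
  unfolding meets_all_flats_def
proof (intro allI impI)
  fix U :: "'a set" assume "flat_in UNIV (int (dim (UNIV :: 'a set)) - int i) U"
  then obtain j P where "j \<le> dim V" "j \<le> i" "i - j \<le> dim W"
    and P: "flat_in W (int (dim W) - int (i - j)) P"
    and fibres: "\<And>w. w \<in> P \<Longrightarrow> \<exists>F. flat_in V (int (dim V) - int j) F \<and> (\<lambda>v. v + w) ` F \<subseteq> U"
    using flat_splits_with_codimensions by (metis dim_UNIV)
  define \<epsilon> where "\<epsilon> = (\<mu> - (covering_minimum V K \<Lambda> j + covering_minimum W L \<Gamma> (i - j))) / 2"
  have "0 < \<epsilon>" using assms \<open>j \<le> dim V\<close> \<open>j \<le> i\<close> \<open>i - j \<le> dim W\<close> by (simp add: \<epsilon>_def)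
  obtain \<mu>2 where "0 \<le> \<mu>2" "\<mu>2 < covering_minimum W L \<Gamma> (i - j) + \<epsilon>"
    and "meets_all_flats W L \<Gamma> (i - j) \<mu>2"
    using meets_all_flats_near_covering_minimum[OF subspace_W body_L lattice_\<Gamma> zero_in_L \<open>0 < \<epsilon>\<close>] .
  then obtain w where "w \<in> P" "w \<in> dil_plus \<mu>2 L \<Gamma>"
    using P unfolding meets_all_flats_def by blast
  then obtain F where F: "flat_in V (int (dim V) - int j) F" and "(\<lambda>v. v + w) ` F \<subseteq> U"
    using fibres by blast
  obtain \<mu>1 where "0 \<le> \<mu>1" "\<mu>1 < covering_minimum V K \<Lambda> j + \<epsilon>" "meets_all_flats V K \<Lambda> j \<mu>1"
    using meets_all_flats_near_covering_minimum[OF subspace_V body_K lattice_\<Lambda> zero_in_K \<open>0 < \<epsilon>\<close>] .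
  then obtain v where "v \<in> F" "v \<in> dil_plus \<mu>1 K \<Lambda>"
    using F unfolding meets_all_flats_def by blast
  have "\<mu>1 + \<mu>2 \<le> \<mu>" using \<open>\<mu>1 < _\<close> \<open>\<mu>2 < _\<close> unfolding \<epsilon>_def by argo
  then have "v + w \<in> dil_plus \<mu> (direct_sum_set K L) (lattice_sum \<Lambda> \<Gamma>)"
    using dil_plus_add_mem_direct_sum[OF convex_K zero_in_K convex_L zero_in_L]
      \<open>0 \<le> \<mu>1\<close> \<open>0 \<le> \<mu>2\<close> \<open>v \<in> dil_plus \<mu>1 K \<Lambda>\<close> \<open>w \<in> dil_plus \<mu>2 L \<Gamma>\<close> by blast
  moreover have "v + w \<in> U" using \<open>v \<in> F\<close> \<open>(\<lambda>v. v + w) ` F \<subseteq> U\<close> by blast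
  ultimately show "dil_plus \<mu> (direct_sum_set K L) (lattice_sum \<Lambda> \<Gamma>) \<inter> U \<noteq> {}" by blast
qed

lemma covering_minima_sum_le:
  assumes "j \<le> dim V" "j \<le> i" "i - j \<le> dim W"
    and "0 \<le> \<mu>" "meets_all_flats UNIV (direct_sum_set K L) (lattice_sum \<Lambda> \<Gamma>) i \<mu>"
  shows "covering_minimum V K \<Lambda> j + covering_minimum W L \<Gamma> (i - j) \<le> \<mu>"
proof (rule ccontr)
  define a where "a = covering_minimum V K \<Lambda> j"
  define b where "b = covering_minimum W L \<Gamma> (i - j)"
  assume "\<not> a + b \<le> \<mu>"
  define \<delta> where "\<delta> = (a + b - \<mu>) / 2"
  have "0 < \<delta>" using \<open>\<not> a + b \<le> \<mu>\<close> by (simp add: \<delta>_def)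
  obtain U1 where U1: "flat_in V (int (dim V) - int j) U1"
    and avoid1: "\<And>\<nu>. 0 \<le> \<nu> \<Longrightarrow> \<nu> \<le> a - \<delta> \<Longrightarrow> dil_plus \<nu> K \<Lambda> \<inter> U1 = {}"
    using flat_avoiding_dil_plus[OF subspace_V convex_K zero_in_K assms(1), of "a - \<delta>" \<Lambda>]
      \<open>0 < \<delta>\<close> unfolding a_def by auto
  obtain U2 where U2: "flat_in W (int (dim W) - int (i - j)) U2"
    and avoid2: "\<And>\<nu>. 0 \<le> \<nu> \<Longrightarrow> \<nu> \<le> b - \<delta> \<Longrightarrow> dil_plus \<nu> L \<Gamma> \<inter> U2 = {}"
    using flat_avoiding_dil_plus[OF subspace_W convex_L zero_in_L assms(3), of "b - \<delta>" \<Gamma>]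
      \<open>0 < \<delta>\<close> unfolding b_def by auto
  have "int (dim V) - int j + (int (dim W) - int (i - j)) = int DIM('a) - int i"
    using dim_V_plus_dim_W assms(2) by (simp add: of_nat_diff)
  then have "flat_in UNIV (int (dim (UNIV :: 'a set)) - int i) {x + y | x y. x \<in> U1 \<and> y \<in> U2}"
    using flat_in_sums[OF subspace_V subspace_W V_Int_W U1 U2] by simp
  then obtain z where "z \<in> dil_plus \<mu> (direct_sum_set K L) (lattice_sum \<Lambda> \<Gamma>)"
    and "z \<in> {x + y | x y. x \<in> U1 \<and> y \<in> U2}"
    using assms(5) unfolding meets_all_flats_def by blast
  then obtain p q t u1 u2 where "0 \<le> t" "t \<le> 1"
    and p: "p \<in> dil_plus (\<mu> * t) K \<Lambda>" and q: "q \<in> dil_plus (\<mu> * (1 - t)) L \<Gamma>"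
    and "u1 \<in> U1" "u2 \<in> U2" "p + q = u1 + u2"
    unfolding dil_plus_direct_sum by blast
  have "p \<in> V" using p dil_plus_subset[OF subspace_V K_subset_V \<Lambda>_subset_V] by blast
  have "q \<in> W" using q dil_plus_subset[OF subspace_W L_subset_W \<Gamma>_subset_W] by blast
  have "u1 \<in> V" "u2 \<in> W" using \<open>u1 \<in> U1\<close> \<open>u2 \<in> U2\<close> U1 U2 by (auto simp: flat_in_def)
  with \<open>p \<in> V\<close> \<open>q \<in> W\<close> have "p \<in> U1" "q \<in> U2"
    using direct_sum_decomposition_unique[OF subspace_V subspace_W V_Int_W] \<open>p + q = u1 + u2\<close>
      \<open>u1 \<in> U1\<close> \<open>u2 \<in> U2\<close> by metis+
  moreover have "\<mu> * t \<le> a - \<delta> \<or> \<mu> * (1 - t) \<le> b - \<delta>"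
    unfolding \<delta>_def right_diff_distrib mult_1_right by argo
  ultimately show False
    using avoid1[of "\<mu> * t"] avoid2[of "\<mu> * (1 - t)"] p q \<open>0 \<le> \<mu>\<close> \<open>0 \<le> t\<close> \<open>t \<le> 1\<close> by auto
qed


lemma covering_minimum_direct_sum:
  assumes "1 \<le> i" "i \<le> DIM('a)"
  shows "covering_minimum UNIV (direct_sum_set K L) (lattice_sum \<Lambda> \<Gamma>) i =
    Max ((\<lambda>j. covering_minimum V K \<Lambda> j + covering_minimum W L \<Gamma> (i - j)) `
           {j. j \<le> dim V \<and> j \<le> i \<and> i - j \<le> dim W})"
    (is "_ = Max (?f ` ?J)")
proof (rule covering_minimum_eqI)
  have "finite ?J" by (rule finite_subset[of _ "{..dim V}"]) auto
  moreover have "min i (dim V) \<in> ?J" using assms(2) dim_V_plus_dim_W by auto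
  ultimately have "Max (?f ` ?J) \<in> ?f ` ?J" and f_le_Max: "\<And>j. j \<in> ?J \<Longrightarrow> ?f j \<le> Max (?f ` ?J)"
    by (auto intro: Max_in)
  show "0 \<le> Max (?f ` ?J)"
    using f_le_Max[OF \<open>min i (dim V) \<in> ?J\<close>] covering_minimum_nonneg[OF subspace_V body_K lattice_\<Lambda>]
      covering_minimum_nonneg[OF subspace_W body_L lattice_\<Gamma>] by (meson add_nonneg_nonneg order_trans)
  show "meets_all_flats UNIV (direct_sum_set K L) (lattice_sum \<Lambda> \<Gamma>) i \<mu>"
    if "Max (?f ` ?J) < \<mu>" for \<mu>
  proof (rule meets_all_flats_direct_sum)
    fix j assume "j \<le> dim V" "j \<le> i" "i - j \<le> dim W"
    then have "?f j \<le> Max (?f ` ?J)" by (intro f_le_Max) simp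
    then show "?f j < \<mu>" using that by simp
  qed
  show "Max (?f ` ?J) \<le> \<mu>"
    if "0 \<le> \<mu>" "meets_all_flats UNIV (direct_sum_set K L) (lattice_sum \<Lambda> \<Gamma>) i \<mu>" for \<mu>
    using \<open>Max (?f ` ?J) \<in> ?f ` ?J\<close> covering_minima_sum_le[OF _ _ _ that] by auto
qed (use assms(1) in simp)

end

theorem theorem1p2:
  fixes V W K L \<Lambda> \<Gamma> :: "'a::euclidean_space set" and l i :: nat
  assumes "subspace V" and "subspace W"
    and "V \<inter> W = {0}" and "{v + w | v w. v \<in> V \<and> w \<in> W} = UNIV"
    and "dim V = l" and "dim W = DIM('a) - l"
    and "convex_body_in V K" and "0 \<in> K"
    and "convex_body_in W L" and "0 \<in> L"
    and "lattice_in V \<Lambda>" and "lattice_in W \<Gamma>"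
    and "1 \<le> i" and "i \<le> DIM('a)"
  shows "covering_minimum UNIV (direct_sum_set K L) (lattice_sum \<Lambda> \<Gamma>) i =
    Max ((\<lambda>j. covering_minimum V K \<Lambda> j + covering_minimum W L \<Gamma> (i - j)) `
           {j. j \<le> l \<and> j \<le> i \<and> i - j \<le> DIM('a) - l})"
proof -
  interpret direct_sum_covering V W K L \<Lambda> \<Gamma>
    using assms by unfold_locales
  show ?thesis
    using covering_minimum_direct_sum[OF assms(13,14)] assms(5,6) by simp
qed

end
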